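(* Let $G$ and $H$ be finite simple graphs without isolated vertices, each of order at least three, and let $f=(V_0,V_1,V_2)$ be a $\gamma_{tR}(G\times H)$-function with $|V_2|$ as large as possible among all $\gamma_{tR}(G\times H)$-functions. The following are equivalent: (i) $G$ and $H$ are both triangle centered; (ii) $\gamma_{tR}(G\times H)=6$; (iii) $|V_1\cup V_2|=3$.
   Context: A total Roman dominating function on a graph $X$ without isolated vertices is a map $f:V(X)\to\{0,1,2\}$, written $f=(V_0,V_1,V_2)$ with $V_i=\{v:f(v)=i\}$, such that every vertex of $V_0$ has a neighbor in $V_2$ and the subgraph induced by $V_1\cup V_2$ has no isolated vertices; $\gamma_{tR}(X)$ is the minimum of $\sum_v f(v)$ over such $f$, and a $\gamma_{tR}(X)$-function is one attaining this minimum. $G$ is triangle centered if it contains a triangle $xyz$ such that every vertex of $G$ is adjacent to at least two vertices of $\{x,y,z\}$. The direct product $G\times H$ has vertex set $V(G)\times V(H)$, with $(g,h)(g',h')$ an edge iff $gg'\in E(G)$ and $hh'\in E(H)$. *)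

theory Defs
  imports Main
begin

definition simple_graph :: "'a set \<Rightarrow> ('a \<Rightarrow> 'a \<Rightarrow> bool) \<Rightarrow> bool" where
  "simple_graph V E \<longleftrightarrow> finite V \<and> (\<forall>x y. E x y \<longrightarrow> x \<in> V \<and> y \<in> V)
     \<and> (\<forall>x y. E x y \<longrightarrow> E y x) \<and> (\<forall>x. \<not> E x x)"

definition no_isolated :: "'a set \<Rightarrow> ('a \<Rightarrow> 'a \<Rightarrow> bool) \<Rightarrow> bool" where
  "no_isolated V E \<longleftrightarrow> (\<forall>v\<in>V. \<exists>u\<in>V. E v u)"

definition dprod_V :: "'a set \<Rightarrow> 'b set \<Rightarrow> ('a \<times> 'b) set" where
  "dprod_V VG VH = VG \<times> VH"

definition dprod_E :: "('a \<Rightarrow> 'a \<Rightarrow> bool) \<Rightarrow> ('b \<Rightarrow> 'b \<Rightarrow> bool) \<Rightarrow> ('a \<times> 'b) \<Rightarrow> ('a \<times> 'b) \<Rightarrow> bool" where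
  "dprod_E EG EH = (\<lambda>(g,h) (g',h'). EG g g' \<and> EH h h')"

text \<open>Total Roman dominating function f = (V0,V1,V2); values outside V are fixed to 0.\<close>
definition is_TRDF :: "'a set \<Rightarrow> ('a \<Rightarrow> 'a \<Rightarrow> bool) \<Rightarrow> ('a \<Rightarrow> nat) \<Rightarrow> bool" where
  "is_TRDF V E f \<longleftrightarrow>
     (\<forall>v. v \<notin> V \<longrightarrow> f v = 0) \<and> (\<forall>v\<in>V. f v \<le> 2)
     \<and> (\<forall>v\<in>V. f v = 0 \<longrightarrow> (\<exists>u\<in>V. E v u \<and> f u = 2))
     \<and> (\<forall>v\<in>V. f v \<ge> 1 \<longrightarrow> (\<exists>u\<in>V. E v u \<and> f u \<ge> 1))"

definition weight :: "'a set \<Rightarrow> ('a \<Rightarrow> nat) \<Rightarrow> nat" where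
  "weight V f = (\<Sum>v\<in>V. f v)"

definition gamma_tR :: "'a set \<Rightarrow> ('a \<Rightarrow> 'a \<Rightarrow> bool) \<Rightarrow> nat" where
  "gamma_tR V E = (LEAST w. \<exists>f. is_TRDF V E f \<and> weight V f = w)"

definition gamma_tR_function :: "'a set \<Rightarrow> ('a \<Rightarrow> 'a \<Rightarrow> bool) \<Rightarrow> ('a \<Rightarrow> nat) \<Rightarrow> bool" where
  "gamma_tR_function V E f \<longleftrightarrow> is_TRDF V E f \<and> weight V f = gamma_tR V E"

definition triangle_centered :: "'a set \<Rightarrow> ('a \<Rightarrow> 'a \<Rightarrow> bool) \<Rightarrow> bool" where
  "triangle_centered V E \<longleftrightarrow> (\<exists>x\<in>V. \<exists>y\<in>V. \<exists>z\<in>V. E x y \<and> E y z \<and> E x z \<and>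
     (\<forall>v\<in>V. card ({x, y, z} \<inter> {u. E v u}) \<ge> 2))"

end

theory Submission
  imports Defs
begin

(* Write V12 = V1 \<union> V2, so that the weight of f is |V12| + |V2| with V2 \<subseteq> V12, and every
   vertex of G \<times> H has a neighbour in V12. As (a, h) and (a, h') are never adjacent, a row
   {a} \<times> H containing V2 lies entirely in V12. A case analysis on |V2| then shows that the
   weight is at least 6, with equality only if V12 = {a1, a2} \<times> {b1, b2} and
   V2 = {(a1, b1), (a2, b2)}, or if V12 = V2 has three elements. In both cases the domination
   of the vertices (g, b_i) forces every vertex g of G to be adjacent to two of three fixed
   vertices, so G is triangle centered; H follows by swapping the factors. Conversely, centre
   triangles xyz of G and abc of H yield the function with value 2 exactly on (x, a), (y, b),
   (z, c), of weight 6 and with |V2| = 3; hence a gamma_tR-function with maximal |V2| has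
   |V2| \<ge> 3 and so |V12| = 3. *)

lemma mem_dprod_V [simp]: "(g, h) \<in> dprod_V VG VH \<longleftrightarrow> g \<in> VG \<and> h \<in> VH"
  by (simp add: dprod_V_def)

lemma dprod_E_Pair [simp]: "dprod_E EG EH (g, h) (g', h') \<longleftrightarrow> EG g g' \<and> EH h h'"
  by (simp add: dprod_E_def)

lemma simple_graphD:
  assumes "simple_graph V E"
  shows "finite V" and "E x y \<Longrightarrow> E y x" and "\<not> E x x"
  using assms by (auto simp: simple_graph_def)

lemma triangle_centeredI:
  assumes "simple_graph V E" and "x \<in> V" "y \<in> V" "z \<in> V"
    and two_of_three: "\<And>v. v \<in> V \<Longrightarrow> (E v x \<and> E v y) \<or> (E v x \<and> E v z) \<or> (E v y \<and> E v z)"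
  shows "triangle_centered V E"
proof -
  have irrefl: "\<not> E v v" for v
    using simple_graphD(3)[OF assms(1)] .
  have edges: "E x y" "E y z" "E x z"
    using two_of_three[OF \<open>x \<in> V\<close>] two_of_three[OF \<open>y \<in> V\<close>] irrefl by blast+
  have "2 \<le> card ({x, y, z} \<inter> {u. E v u})" if v: "v \<in> V" for v
  proof -
    have "x \<noteq> y" "y \<noteq> z" "x \<noteq> z"
      using edges irrefl by metis+
    moreover consider "{x, y} \<subseteq> {x, y, z} \<inter> {u. E v u}" | "{x, z} \<subseteq> {x, y, z} \<inter> {u. E v u}"
      | "{y, z} \<subseteq> {x, y, z} \<inter> {u. E v u}"
      using two_of_three[OF v] by auto
    ultimately show ?thesis
      by cases (metis card_2_iff card_mono finite.emptyI finite.insertI finite_Int)+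
  qed
  then show ?thesis
    unfolding triangle_centered_def using assms(2-4) edges by blast
qed

lemma triangle_centeredE:
  assumes "triangle_centered V E"
  obtains x y z where "x \<in> V" "y \<in> V" "z \<in> V" "E x y" "E y z" "E x z"
    and "\<And>v. v \<in> V \<Longrightarrow> (E v x \<and> E v y) \<or> (E v x \<and> E v z) \<or> (E v y \<and> E v z)"
proof -
  have two_of_three: "(x \<in> A \<and> y \<in> A) \<or> (x \<in> A \<and> z \<in> A) \<or> (y \<in> A \<and> z \<in> A)"
    if "2 \<le> card ({x, y, z} \<inter> A)" for x y z :: 'a and A
    using that by (cases "x \<in> A"; cases "y \<in> A"; cases "z \<in> A") auto
  from assms obtain x y z where xyz: "x \<in> V" "y \<in> V" "z \<in> V" "E x y" "E y z" "E x z"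
    and "\<forall>v\<in>V. 2 \<le> card ({x, y, z} \<inter> {u. E v u})"
    unfolding triangle_centered_def by blast
  then show thesis
    using that[OF xyz] two_of_three[of x y z "{u. E _ u}"] by simp
qed

lemma triangle_centered_if_dominating_edge:
  assumes "simple_graph V E" and "3 \<le> card V" and "x \<in> V" "y \<in> V" "E x y"
    and "\<And>v. v \<in> V \<Longrightarrow> v \<noteq> x \<Longrightarrow> v \<noteq> y \<Longrightarrow> E v x \<and> E v y"
  shows "triangle_centered V E"
proof -
  have "\<not> V \<subseteq> {x, y}"
    using card_mono[of "{x, y}" V] card_insert_le_m1[of 2 "{y}" x] assms(2) by auto
  then obtain z where "z \<in> V" "z \<noteq> x" "z \<noteq> y"
    by blast
  show ?thesis
  proof (rule triangle_centeredI[OF assms(1) \<open>x \<in> V\<close> \<open>y \<in> V\<close> \<open>z \<in> V\<close>])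
    fix v assume "v \<in> V"
    then show "(E v x \<and> E v y) \<or> (E v x \<and> E v z) \<or> (E v y \<and> E v z)"
      using assms(5,6) \<open>z \<in> V\<close> \<open>z \<noteq> x\<close> \<open>z \<noteq> y\<close> simple_graphD(2)[OF assms(1)]
      by (cases "v = x"; cases "v = y") auto
  qed
qed

lemma weight_eq_card_levels:
  assumes "finite V" and "\<And>v. v \<in> V \<Longrightarrow> f v \<le> 2"
  shows "weight V f = card {v \<in> V. 1 \<le> f v} + card {v \<in> V. f v = 2}"
proof -
  have "weight V f = (\<Sum>v\<in>V. (if 1 \<le> f v then 1 else 0) + (if f v = 2 then 1 else 0))"
    unfolding weight_def using assms(2) by (intro sum.cong refl) (fastforce simp: not_less_eq_eq)
  also have "\<dots> = card {v \<in> V. 1 \<le> f v} + card {v \<in> V. f v = 2}"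
    using assms(1) by (simp add: sum.distrib sum.inter_filter[symmetric])
  finally show ?thesis .
qed

lemma gamma_tR_le_weight:
  assumes "is_TRDF V E f"
  shows "gamma_tR V E \<le> weight V f"
  unfolding gamma_tR_def by (rule Least_le) (use assms in blast)

lemma gamma_tR_attained:
  assumes "is_TRDF V E f"
  obtains g where "gamma_tR_function V E g"
  using LeastI_ex[of "\<lambda>w. \<exists>f. is_TRDF V E f \<and> weight V f = w"] assms
  unfolding gamma_tR_function_def gamma_tR_def by blast

lemma is_TRDF_if_all_dominated_by_twos:
  assumes "\<And>v. v \<notin> V \<Longrightarrow> f v = 0" and "\<And>v. v \<in> V \<Longrightarrow> f v \<le> 2"
    and "\<And>v. v \<in> V \<Longrightarrow> \<exists>u \<in> V. E v u \<and> f u = 2"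
  shows "is_TRDF V E f"
  using assms unfolding is_TRDF_def by fastforce

lemma is_TRDF_dprod_swap:
  assumes "is_TRDF (dprod_V VG VH) (dprod_E EG EH) f"
  shows "is_TRDF (dprod_V VH VG) (dprod_E EH EG) (f \<circ> prod.swap)"
  using assms unfolding is_TRDF_def dprod_V_def dprod_E_def by (auto; blast)

lemma dprod_levels_swap:
  "{v \<in> dprod_V VH VG. 1 \<le> (f \<circ> prod.swap) v} = prod.swap ` {v \<in> dprod_V VG VH. 1 \<le> f v}"
  "{v \<in> dprod_V VH VG. (f \<circ> prod.swap) v = 2} = prod.swap ` {v \<in> dprod_V VG VH. f v = 2}"
  by (auto simp: dprod_V_def)

lemma weight_dprod_swap:
  "weight (dprod_V VH VG) (f \<circ> prod.swap) = weight (dprod_V VG VH) f"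
proof -
  have "sum f (VG \<times> VH) = sum f (prod.swap ` (VH \<times> VG))"
    by (simp only: product_swap)
  also have "\<dots> = sum (f \<circ> prod.swap) (VH \<times> VG)"
    by (rule sum.reindex) (rule inj_swap)
  finally show ?thesis
    unfolding weight_def dprod_V_def ..
qed

locale graph_pair =
  fixes VG :: "'a set" and EG :: "'a \<Rightarrow> 'a \<Rightarrow> bool"
    and VH :: "'b set" and EH :: "'b \<Rightarrow> 'b \<Rightarrow> bool"
  assumes simple_G: "simple_graph VG EG" and card_G: "3 \<le> card VG"
    and simple_H: "simple_graph VH EH" and card_H: "3 \<le> card VH"
begin

abbreviation PV :: "('a \<times> 'b) set" where "PV \<equiv> dprod_V VG VH"
abbreviation PE :: "'a \<times> 'b \<Rightarrow> 'a \<times> 'b \<Rightarrow> bool" where "PE \<equiv> dprod_E EG EH"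
abbreviation V12 :: "('a \<times> 'b \<Rightarrow> nat) \<Rightarrow> ('a \<times> 'b) set"
  where "V12 f \<equiv> {v \<in> PV. 1 \<le> f v}"
abbreviation V2 :: "('a \<times> 'b \<Rightarrow> nat) \<Rightarrow> ('a \<times> 'b) set"
  where "V2 f \<equiv> {v \<in> PV. f v = 2}"

lemma graph_pair_swap: "graph_pair VH EH VG EG"
  using simple_G simple_H card_G card_H by unfold_locales

lemmas finite_G = simple_graphD(1)[OF simple_G] and irrefl_G = simple_graphD(3)[OF simple_G]
lemmas finite_H = simple_graphD(1)[OF simple_H] and irrefl_H = simple_graphD(3)[OF simple_H]

lemma finite_PV: "finite PV"
  using finite_G finite_H by (simp add: dprod_V_def)

lemma card_PV: "9 \<le> card PV"
  using mult_le_mono[OF card_G card_H] by (simp add: dprod_V_def card_cartesian_product)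

context
  fixes f :: "'a \<times> 'b \<Rightarrow> nat"
  assumes trdf: "is_TRDF PV PE f"
begin

lemma weight_eq_card: "weight PV f = card (V12 f) + card (V2 f)"
  using trdf finite_PV by (intro weight_eq_card_levels) (auto simp: is_TRDF_def)

lemma card_V2_le_card_V12: "card (V2 f) \<le> card (V12 f)"
  using finite_PV by (intro card_mono) auto

lemma V12_neighbour:
  assumes "(g, h) \<in> PV"
  shows "\<exists>(a, b) \<in> V12 f. EG g a \<and> EH h b"
proof -
  have "\<exists>u \<in> PV. PE (g, h) u \<and> 1 \<le> f u"
    using trdf assms unfolding is_TRDF_def by (cases "f (g, h) = 0") fastforce+
  then show ?thesis
    by (fastforce simp: dprod_E_def)
qed

lemma V2_neighbour:
  assumes "(g, h) \<in> PV" and "(g, h) \<notin> V12 f"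
  shows "\<exists>(a, b) \<in> V2 f. EG g a \<and> EH h b"
proof -
  have "\<exists>u \<in> PV. PE (g, h) u \<and> f u = 2"
    using trdf assms unfolding is_TRDF_def by simp
  then show ?thesis
    by (fastforce simp: dprod_E_def)
qed

lemma V12_if_no_V2_neighbour:
  assumes "(g, h) \<in> PV" and "\<And>a b. (a, b) \<in> V2 f \<Longrightarrow> EG g a \<Longrightarrow> EH h b \<Longrightarrow> False"
  shows "(g, h) \<in> V12 f"
  using V2_neighbour assms by blast

lemma V12_eq_PV_if_V2_empty:
  assumes "V2 f = {}"
  shows "V12 f = PV"
  using V2_neighbour assms by fast

lemma card_V12_if_card_V2_1:
  assumes "card (V2 f) = 1"
  shows "6 \<le> card (V12 f)"
proof -
  obtain t where "V2 f = {t}"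
    using assms card_1_singleton_iff[of "V2 f"] by auto
  moreover obtain a b where "t = (a, b)"
    by fastforce
  ultimately have V2: "V2 f = {(a, b)}"
    by simp
  then have "(a, b) \<in> V2 f"
    using V2 by simp
  then have ab: "a \<in> VG" "b \<in> VH" "(a, b) \<in> V12 f"
    by auto
  have "(a, h) \<in> V12 f" if "h \<in> VH" for h
    by (rule V12_if_no_V2_neighbour) (use that ab V2 irrefl_G in auto)
  moreover have "(g, b) \<in> V12 f" if "g \<in> VG" for g
    by (rule V12_if_no_V2_neighbour) (use that ab V2 irrefl_H in auto)
  ultimately have line: "{a} \<times> VH \<union> VG \<times> {b} \<subseteq> V12 f"
    by blast
  obtain c d where cd: "(c, d) \<in> V12 f" "EG a c" "EH b d"
    using V12_neighbour[of a b] ab by auto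
  then have "(c, d) \<notin> {a} \<times> VH \<union> VG \<times> {b}"
    using irrefl_G irrefl_H by auto
  moreover have "{a} \<times> VH \<inter> VG \<times> {b} = {(a, b)}"
    using ab by auto
  then have "card ({a} \<times> VH \<union> VG \<times> {b}) + 1 = card VH + card VG"
    using card_Un_Int[of "{a} \<times> VH" "VG \<times> {b}"] finite_G finite_H
    by (simp add: card_cartesian_product)
  ultimately have "card (insert (c, d) ({a} \<times> VH \<union> VG \<times> {b})) \<ge> 6"
    using card_G card_H finite_G finite_H by simp
  moreover have sub: "insert (c, d) ({a} \<times> VH \<union> VG \<times> {b}) \<subseteq> V12 f"
    using line cd by blast
  ultimately show ?thesis
    using card_mono[OF _ sub] finite_PV by fastforce
qed

lemma card_V12_if_V2_in_row:
  assumes row: "V2 f \<subseteq> {a} \<times> VH" and ab: "(a, b) \<in> V2 f"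
  shows "card VH + 2 \<le> card (V12 f)"
proof -
  have "a \<in> VG" "b \<in> VH" "(a, b) \<in> V12 f"
    using ab by auto
  have "(a, h) \<in> V12 f" if "h \<in> VH" for h
  proof (rule V12_if_no_V2_neighbour)
    show "(a, h) \<in> PV"
      using that \<open>a \<in> VG\<close> by simp
    fix a' b' assume "(a', b') \<in> V2 f" "EG a a'"
    then show False
      using row irrefl_G by blast
  qed
  then have line: "{a} \<times> VH \<subseteq> V12 f"
    by blast
  obtain c d where cd: "(c, d) \<in> V12 f" "EG a c" "EH b d"
    using V12_neighbour[of a b] \<open>(a, b) \<in> V12 f\<close> by auto
  then have "d \<in> VH"
    by simp
  obtain e k where ek: "(e, k) \<in> V12 f" "EG a e" "EH d k"
    using V12_neighbour[of a d] \<open>a \<in> VG\<close> \<open>d \<in> VH\<close> by auto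
  have new: "(c, d) \<notin> {a} \<times> VH" "(e, k) \<notin> insert (c, d) ({a} \<times> VH)"
    using cd ek irrefl_G irrefl_H by auto
  have "card (insert (e, k) (insert (c, d) ({a} \<times> VH))) = card VH + 2"
    using new finite_H by (simp add: card_cartesian_product)
  moreover have sub: "insert (e, k) (insert (c, d) ({a} \<times> VH)) \<subseteq> V12 f"
    using line cd ek by blast
  ultimately show ?thesis
    using card_mono[OF _ sub] finite_PV by fastforce
qed

lemma V12_eq_square:
  assumes V2: "V2 f = {(a1, b1), (a2, b2)}" and small: "card (V12 f) \<le> 4"
  shows "a1 \<noteq> a2" and "b1 \<noteq> b2" and "V12 f = {(a1, b1), (a2, b2), (a1, b2), (a2, b1)}"
proof -
  have in_V2: "(a1, b1) \<in> V2 f" "(a2, b2) \<in> V2 f"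
    using V2 by simp_all
  then have in_PV: "a1 \<in> VG" "a2 \<in> VG" "b1 \<in> VH" "b2 \<in> VH"
    by auto
  show a: "a1 \<noteq> a2"
  proof
    assume "a1 = a2"
    then have "card VH + 2 \<le> card (V12 f)"
      using card_V12_if_V2_in_row[of a1 b1] V2 \<open>b1 \<in> VH\<close> \<open>b2 \<in> VH\<close> by simp
    then show False
      using small card_H by linarith
  qed
  show b: "b1 \<noteq> b2"
  proof
    assume "b1 = b2"
    then have V2': "V2 f = {(a1, b1), (a2, b1)}"
      using V2 by simp
    have "card VG + 2 \<le> card (prod.swap ` V12 f)"
      using graph_pair.card_V12_if_V2_in_row[OF graph_pair_swap is_TRDF_dprod_swap[OF trdf], of b1 a1]
        \<open>a1 \<in> VG\<close> \<open>a2 \<in> VG\<close> \<open>b1 \<in> VH\<close>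
      unfolding dprod_levels_swap V2' by auto
    then show False
      using small card_G by (simp add: card_image)
  qed
  have "(a1, b2) \<in> V12 f"
    by (rule V12_if_no_V2_neighbour) (use in_PV irrefl_G irrefl_H in \<open>auto simp: V2\<close>)
  moreover have "(a2, b1) \<in> V12 f"
    by (rule V12_if_no_V2_neighbour) (use in_PV irrefl_G irrefl_H in \<open>auto simp: V2\<close>)
  moreover have "(a1, b1) \<in> V12 f" "(a2, b2) \<in> V12 f"
    using in_V2 by auto
  ultimately have sub: "{(a1, b1), (a2, b2), (a1, b2), (a2, b1)} \<subseteq> V12 f"
    by blast
  moreover have "card {(a1, b1), (a2, b2), (a1, b2), (a2, b1)} = 4"
    using a b by simp
  ultimately have "{(a1, b1), (a2, b2), (a1, b2), (a2, b1)} = V12 f"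
    using card_seteq[OF _ sub] finite_PV small by simp
  then show "V12 f = {(a1, b1), (a2, b2), (a1, b2), (a2, b1)}"
    by simp
qed

lemma triangle_centered_if_square:
  assumes V2: "V2 f = {(a1, b1), (a2, b2)}"
    and V12: "V12 f = {(a1, b1), (a2, b2), (a1, b2), (a2, b1)}"
  shows "triangle_centered VG EG"
proof (rule triangle_centered_if_dominating_edge[OF simple_G card_G])
  have "(a1, b1) \<in> V2 f" "(a2, b2) \<in> V2 f"
    using V2 by simp_all
  then have a: "a1 \<in> VG" "a2 \<in> VG" and b: "b1 \<in> VH" "b2 \<in> VH"
    by auto
  then show "a1 \<in> VG" "a2 \<in> VG"
    by simp_all
  show "EG a1 a2"
    using V12_neighbour[of a1 b1] irrefl_G irrefl_H a b unfolding V12 by auto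
  fix g assume "g \<in> VG" "g \<noteq> a1" "g \<noteq> a2"
  then have "(g, b1) \<notin> V12 f" "(g, b2) \<notin> V12 f"
    unfolding V12 by auto
  then show "EG g a1 \<and> EG g a2"
    using V2_neighbour[of g b1] V2_neighbour[of g b2] irrefl_H \<open>g \<in> VG\<close> b
    unfolding V2 by auto
qed

lemma triangle_centered_if_card_V12_3:
  assumes "card (V12 f) = 3"
  shows "triangle_centered VG EG"
proof -
  obtain t1 t2 t3 where "V12 f = {t1, t2, t3}"
    using assms by (meson card_3_iff)
  moreover obtain a1 b1 a2 b2 a3 b3 where "t1 = (a1, b1)" "t2 = (a2, b2)" "t3 = (a3, b3)"
    by fastforce
  ultimately have V12: "V12 f = {(a1, b1), (a2, b2), (a3, b3)}"
    by simp
  then have "(a1, b1) \<in> V12 f" "(a2, b2) \<in> V12 f" "(a3, b3) \<in> V12 f"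
    by simp_all
  then have a: "a1 \<in> VG" "a2 \<in> VG" "a3 \<in> VG" and b: "b1 \<in> VH" "b2 \<in> VH" "b3 \<in> VH"
    by auto
  have "(EG g a2 \<or> EG g a3) \<and> (EG g a1 \<or> EG g a3) \<and> (EG g a1 \<or> EG g a2)" if "g \<in> VG" for g
    using V12_neighbour[of g b1] V12_neighbour[of g b2] V12_neighbour[of g b3] irrefl_H that b
    unfolding V12 by auto
  then show ?thesis
    using triangle_centeredI[OF simple_G a] by blast
qed

lemma weight_le_6D:
  assumes "weight PV f \<le> 6"
  shows "weight PV f = 6 \<and> triangle_centered VG EG"
proof -
  have w: "weight PV f = card (V12 f) + card (V2 f)"
    by (rule weight_eq_card)
  consider "card (V2 f) = 0" | "card (V2 f) = 1" | "card (V2 f) = 2" | "3 \<le> card (V2 f)"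
    by linarith
  then show ?thesis
  proof cases
    case 1
    then have "V12 f = PV"
      using finite_PV V12_eq_PV_if_V2_empty by simp
    then show ?thesis
      using card_PV w assms by simp
  next
    case 2
    then have "6 \<le> card (V12 f)"
      by (rule card_V12_if_card_V2_1)
    then show ?thesis
      using w assms 2 by linarith
  next
    case 3
    then obtain t1 t2 where "V2 f = {t1, t2}"
      by (meson card_2_iff)
    moreover obtain a1 b1 a2 b2 where "t1 = (a1, b1)" "t2 = (a2, b2)"
      by fastforce
    ultimately have V2: "V2 f = {(a1, b1), (a2, b2)}"
      by simp
    then have "card (V12 f) \<le> 4"
      using w assms 3 by simp
    note square = V12_eq_square[OF V2 this]
    then have "card (V12 f) = 4"
      by simp
    moreover have "triangle_centered VG EG"
      by (rule triangle_centered_if_square[OF V2 square(3)])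
    ultimately show ?thesis
      using w 3 by simp
  next
    case 4
    then have "card (V12 f) = 3"
      using w card_V2_le_card_V12 assms by linarith
    then have "triangle_centered VG EG"
      by (rule triangle_centered_if_card_V12_3)
    then show ?thesis
      using w 4 \<open>card (V12 f) = 3\<close> assms by simp
  qed
qed

lemma six_le_weight: "6 \<le> weight PV f"
  using weight_le_6D by (cases "weight PV f \<le> 6") auto

lemma triangle_centered_if_weight_6:
  assumes "weight PV f = 6"
  shows "triangle_centered VG EG \<and> triangle_centered VH EH"
proof -
  have "weight (dprod_V VH VG) (f \<circ> prod.swap) = 6"
    unfolding weight_dprod_swap by (rule assms)
  then show ?thesis
    using weight_le_6D graph_pair.weight_le_6D[OF graph_pair_swap is_TRDF_dprod_swap[OF trdf]]
      assms by simp
qed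

end

lemma TRDF_weight_6_if_triangle_centered:
  assumes "triangle_centered VG EG" and "triangle_centered VH EH"
  obtains f where "is_TRDF PV PE f" and "weight PV f = 6" and "card (V2 f) = 3"
proof -
  obtain x y z where G: "x \<in> VG" "y \<in> VG" "z \<in> VG" "EG x y" "EG y z" "EG x z"
    and cover_G: "\<And>g. g \<in> VG \<Longrightarrow> (EG g x \<and> EG g y) \<or> (EG g x \<and> EG g z) \<or> (EG g y \<and> EG g z)"
    using assms(1) by (rule triangle_centeredE) blast
  obtain a b c where H: "a \<in> VH" "b \<in> VH" "c \<in> VH"
    and cover_H: "\<And>h. h \<in> VH \<Longrightarrow> (EH h a \<and> EH h b) \<or> (EH h a \<and> EH h c) \<or> (EH h b \<and> EH h c)"
    using assms(2) by (rule triangle_centeredE) blast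
  define D where "D = {(x, a), (y, b), (z, c)}"
  define f :: "'a \<times> 'b \<Rightarrow> nat" where "f v = (if v \<in> D then 2 else 0)" for v
  have D: "D \<subseteq> PV"
    using G H by (auto simp: D_def)
  have dominated: "\<exists>u \<in> PV. PE v u \<and> f u = 2" if v: "v \<in> PV" for v
  proof -
    obtain g h where "v = (g, h)" "g \<in> VG" "h \<in> VH"
      using v by (cases v) auto
    then have "\<exists>u \<in> D. PE v u"
      using cover_G[of g] cover_H[of h] unfolding D_def by auto
    then show ?thesis
      using D by (auto simp: f_def)
  qed
  have trdf: "is_TRDF PV PE f"
    by (rule is_TRDF_if_all_dominated_by_twos[OF _ _ dominated]) (use D in \<open>auto simp: f_def\<close>)
  have "1 \<le> f v \<longleftrightarrow> v \<in> D" "f v = 2 \<longleftrightarrow> v \<in> D" for v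
    by (simp_all add: f_def)
  then have "V12 f = D" "V2 f = D"
    using D by blast+
  moreover have "x \<noteq> y" "y \<noteq> z" "x \<noteq> z"
    using G(4-6) irrefl_G by metis+
  then have "card D = 3"
    by (simp add: D_def)
  ultimately show thesis
    using that[OF trdf] weight_eq_card[OF trdf] by simp
qed

lemma gamma_tR_function_if_triangle_centered:
  assumes "triangle_centered VG EG" and "triangle_centered VH EH"
  obtains f where "gamma_tR_function PV PE f" and "card (V2 f) = 3" and "gamma_tR PV PE = 6"
proof -
  obtain f where f: "is_TRDF PV PE f" "weight PV f = 6" "card (V2 f) = 3"
    using TRDF_weight_6_if_triangle_centered[OF assms] .
  obtain g where "gamma_tR_function PV PE g"
    using gamma_tR_attained[OF f(1)] .
  then have "6 \<le> gamma_tR PV PE"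
    using six_le_weight[of g] unfolding gamma_tR_function_def by simp
  moreover have "gamma_tR PV PE \<le> 6"
    using gamma_tR_le_weight[OF f(1)] f(2) by simp
  ultimately show thesis
    using that[of f] f unfolding gamma_tR_function_def by simp
qed

end

theorem theorem3p3:
  fixes VG :: "'a set" and EG :: "'a \<Rightarrow> 'a \<Rightarrow> bool"
    and VH :: "'b set" and EH :: "'b \<Rightarrow> 'b \<Rightarrow> bool"
    and f :: "'a \<times> 'b \<Rightarrow> nat"
  assumes "simple_graph VG EG" and "no_isolated VG EG" and "card VG \<ge> 3"
    and "simple_graph VH EH" and "no_isolated VH EH" and "card VH \<ge> 3"
    and "gamma_tR_function (dprod_V VG VH) (dprod_E EG EH) f"
    and "\<forall>f'. gamma_tR_function (dprod_V VG VH) (dprod_E EG EH) f' \<longrightarrow>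
           card {v \<in> dprod_V VG VH. f' v = 2} \<le> card {v \<in> dprod_V VG VH. f v = 2}"
  shows "((triangle_centered VG EG \<and> triangle_centered VH EH)
            \<longleftrightarrow> gamma_tR (dprod_V VG VH) (dprod_E EG EH) = 6)
       \<and> (gamma_tR (dprod_V VG VH) (dprod_E EG EH) = 6
            \<longleftrightarrow> card {v \<in> dprod_V VG VH. f v \<ge> 1} = 3)"
proof -
  interpret graph_pair VG EG VH EH
    using assms(1,3,4,6) by unfold_locales
  have trdf: "is_TRDF PV PE f" and weight_f: "weight PV f = gamma_tR PV PE"
    using assms(7) unfolding gamma_tR_function_def by auto
  have gamma_split: "gamma_tR PV PE = card (V12 f) + card (V2 f)"
    using weight_eq_card[OF trdf] weight_f by simp
  have from_tc: "gamma_tR PV PE = 6 \<and> 3 \<le> card (V2 f)"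
    if tc: "triangle_centered VG EG" "triangle_centered VH EH"
  proof -
    obtain f0 where "gamma_tR_function PV PE f0" "card (V2 f0) = 3" "gamma_tR PV PE = 6"
      using gamma_tR_function_if_triangle_centered[OF tc] .
    then show ?thesis
      using assms(8) by auto
  qed
  have to_tc: "triangle_centered VG EG \<and> triangle_centered VH EH" if "gamma_tR PV PE = 6"
    using triangle_centered_if_weight_6[OF trdf] weight_f that by simp
  show ?thesis
  proof (intro conjI iffI)
    show "card (V12 f) = 3" if "gamma_tR PV PE = 6"
      using from_tc to_tc[OF that] that gamma_split card_V2_le_card_V12[OF trdf] by fastforce
    show "gamma_tR PV PE = 6" if "card (V12 f) = 3"
      using that gamma_split card_V2_le_card_V12[OF trdf] six_le_weight[OF trdf] weight_f
      by linarith
  qed (use from_tc to_tc in auto)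
qed

end
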